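(* Let $t$ be an integer with $m=2t+1\geq 11$ and $n=2^m+1$, and let $x$ be an odd integer. Then: (1) if $1\leq x\leq 2^{t+1}-3$, then $x$ is a coset leader; (2) if $2^{t+1}+3\leq x\leq 2^{t+1}+2^{t}-3$, then $x$ is a coset leader; (3) if $2^{t+1}+2^{t}+3\leq x\leq 2^{t+2}-9$, then $x$ is a coset leader; (4) if $x\in\{2^{t+1}-1,\ 2^{t+1}+1,\ 2^{t+1}+2^{t}-1,\ 2^{t+1}+2^{t}+1\}$ or $2^{t+2}-7\leq x\leq 2^{t+2}+7$, then $x$ is not a coset leader.
   Context: For $n=2^m+1$ and an integer $x$, the 2-cyclotomic coset of $x$ modulo $n$ is $C_x=\{x\cdot 2^{j} \bmod n : j\geq 0\}\subseteq\{0,1,\dots,n-1\}$, and $|C_x|$ denotes its cardinality. For $0\leq x\leq n-1$, "$x$ is a coset leader" means that $x$ is the smallest element of $C_x$. *)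

theory Defs
  imports Main
begin

definition cyc_coset :: "nat \<Rightarrow> nat \<Rightarrow> nat set" where
  "cyc_coset n x = {(x * 2 ^ j) mod n | j. True}"

definition coset_leader :: "nat \<Rightarrow> nat \<Rightarrow> bool" where
  "coset_leader n x \<longleftrightarrow> x < n \<and> x = Min (cyc_coset n x)"

end

theory Submission
  imports Defs
begin

text \<open>Since \<open>2^m \<equiv> -1 (mod n)\<close>, the coset of \<open>x\<close> consists of the residues
\<open>r\<^sub>j = x 2^j mod n\<close> for \<open>j < m\<close> together with the \<open>n - r\<^sub>j\<close>, so \<open>x\<close> is a leader exactly
when every \<open>r\<^sub>j\<close> lies in the window \<open>[x, n - x]\<close>. Writing \<open>n - 1 = a b\<close> with \<open>b = 2^j\<close>
and \<open>x = h a + c\<close>, \<open>0 \<le> c < a\<close>, one has \<open>x b \<equiv> c b - h (mod n)\<close>, which makes every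
\<open>r\<^sub>j\<close> explicit. Put \<open>P = 2^t\<close>, so \<open>n = 2P\<^sup>2 + 1\<close>. For \<open>j < t\<close> nothing wraps around; for
\<open>j = t, t + 1\<close> the quotient \<open>h \<le> 3\<close> is read off the range of \<open>x\<close>; for \<open>j \<ge> t + 2\<close> the
divisor \<open>a\<close> is even and \<open>x\<close> odd, so \<open>c \<ge> 1\<close> and \<open>r\<^sub>j \<ge> b - h \<ge> x\<close>. The excluded values
of \<open>x\<close> are those for which one of the exponents \<open>t - 1, t, t + 1\<close> pushes \<open>r\<^sub>j\<close> or
\<open>n - r\<^sub>j\<close> below \<open>x\<close>.\<close>

lemma coset_leader_iff_le:
  assumes "0 < n"
  shows "coset_leader n x \<longleftrightarrow> x < n \<and> (\<forall>k. x \<le> x * 2 ^ k mod n)"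
proof -
  have fin: "finite (cyc_coset n x)"
    by (rule finite_subset[of _ "{..<n}"]) (auto simp: cyc_coset_def assms)
  have "x \<in> cyc_coset n x" if "x < n"
    using that by (auto simp: cyc_coset_def intro!: exI[of _ 0])
  then have "x = Min (cyc_coset n x) \<longleftrightarrow> (\<forall>y \<in> cyc_coset n x. x \<le> y)" if "x < n"
    using fin that by (metis Min_eq_iff empty_iff)
  then show ?thesis
    by (auto simp: coset_leader_def cyc_coset_def)
qed

lemma mult_two_pow_add_mod:
  fixes n m x i :: nat
  assumes "n = 2 ^ m + 1"
  shows "x * 2 ^ (m + i) mod n = (n - x * 2 ^ i mod n) mod n"
proof -
  define A where "A = int (x * 2 ^ i)"
  have "int (x * 2 ^ (m + i)) = - A + A * int n"
    by (simp add: A_def assms power_add algebra_simps)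
  then have "int (x * 2 ^ (m + i)) mod int n = (- (A mod int n)) mod int n"
    by (metis mod_minus_eq mod_mult_self1)
  also have "\<dots> = (int n - A mod int n) mod int n"
    by (metis diff_conv_add_uminus mod_add_self1)
  also have "\<dots> = int ((n - x * 2 ^ i mod n) mod n)"
    using assms by (simp add: A_def of_nat_mod less_imp_le)
  finally show ?thesis
    by (metis of_nat_eq_iff of_nat_mod)
qed

lemma mult_two_pow_add_mod_pos:
  fixes n m x i :: nat
  assumes "n = 2 ^ m + 1" and "0 < x * 2 ^ i mod n"
  shows "x * 2 ^ (m + i) mod n = n - x * 2 ^ i mod n"
  using mult_two_pow_add_mod[OF assms(1)] assms by simp

lemma mult_two_pow_mod_window:
  fixes n m x :: nat
  assumes n: "n = 2 ^ m + 1" and "0 < m" and "0 < x"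
    and window: "\<And>j. j < m \<Longrightarrow> x \<le> x * 2 ^ j mod n \<and> x * 2 ^ j mod n + x \<le> n"
  shows "x \<le> x * 2 ^ k mod n \<and> x * 2 ^ k mod n + x \<le> n"
proof (induction k rule: less_induct)
  case (less k)
  show ?case
  proof (cases "k < m")
    case True
    then show ?thesis using window by blast
  next
    case False
    define i where "i = k - m"
    have k: "k = m + i" and "i < k" using False \<open>0 < m\<close> by (auto simp: i_def)
    then have "x \<le> x * 2 ^ i mod n \<and> x * 2 ^ i mod n + x \<le> n" using less.IH by blast
    moreover have "x * 2 ^ k mod n = n - x * 2 ^ i mod n"
      unfolding k using calculation \<open>0 < x\<close> by (intro mult_two_pow_add_mod_pos[OF n]) auto
    ultimately show ?thesis by linarith
  qed
qed

theorem coset_leader_iff_window: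
  fixes n m x :: nat
  assumes n: "n = 2 ^ m + 1" and "0 < m" and "0 < x" and "x < n"
  shows "coset_leader n x \<longleftrightarrow> (\<forall>j<m. x \<le> x * 2 ^ j mod n \<and> x * 2 ^ j mod n + x \<le> n)"
proof
  assume "coset_leader n x"
  then have le: "x \<le> x * 2 ^ k mod n" for k
    using coset_leader_iff_le n by simp
  show "\<forall>j<m. x \<le> x * 2 ^ j mod n \<and> x * 2 ^ j mod n + x \<le> n"
  proof (intro allI impI conjI)
    fix j
    show "x \<le> x * 2 ^ j mod n" by (rule le)
    show "x * 2 ^ j mod n + x \<le> n"
    proof (rule ccontr)
      assume "\<not> x * 2 ^ j mod n + x \<le> n"
      moreover have "x * 2 ^ (m + j) mod n = n - x * 2 ^ j mod n"
        using le[of j] \<open>0 < x\<close> by (intro mult_two_pow_add_mod_pos[OF n]) auto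
      moreover have "x * 2 ^ j mod n < n" using n by simp
      ultimately show False using le[of "m + j"] by linarith
    qed
  qed
next
  assume "\<forall>j<m. x \<le> x * 2 ^ j mod n \<and> x * 2 ^ j mod n + x \<le> n"
  then have "x \<le> x * 2 ^ k mod n" for k
    using mult_two_pow_mod_window[OF n \<open>0 < m\<close> \<open>0 < x\<close>] by blast
  then show "coset_leader n x"
    using coset_leader_iff_le n \<open>x < n\<close> by simp
qed

lemma mult_mod_Suc_mult:
  fixes a b h c :: nat
  assumes "c < a" and "h \<le> c * b"
  shows "(h * a + c) * b mod (a * b + 1) = c * b - h"
proof -
  have "(h * a + c) * b = (c * b - h) + h * (a * b + 1)"
    using assms(2) by (simp add: algebra_simps)
  moreover have "c * b - h < a * b + 1"
    using assms(1) mult_le_mono1[of c a b] by linarith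
  ultimately show ?thesis
    by (simp only: mod_mult_self1 mod_less)
qed

lemma mult_mod_Suc_mult_window_iff:
  fixes a b h c :: nat
  assumes "c < a" and "h \<le> c * b"
  defines "x \<equiv> h * a + c" and "r \<equiv> (h * a + c) * b mod (a * b + 1)"
  shows "x \<le> r \<and> r + x \<le> a * b + 1 \<longleftrightarrow> x + h \<le> c * b \<and> c * b + x \<le> a * b + 1 + h"
  using mult_mod_Suc_mult[OF assms(1,2)] assms(2) unfolding x_def r_def by linarith

lemma mult_mod_window_no_wrap:
  fixes a b x :: nat
  assumes "0 < b" and "x * (b + 1) \<le> a * b"
  shows "x \<le> x * b mod (a * b + 1) \<and> x * b mod (a * b + 1) + x \<le> a * b + 1"
proof -
  have "x \<le> x * b" using \<open>0 < b\<close> by simp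
  moreover have "x * b + x \<le> a * b" using assms(2) by (simp add: algebra_simps)
  ultimately show ?thesis by simp
qed

lemma mult_mod_window_even_divisor:
  fixes a b x :: nat
  assumes "even a" and "0 < a" and "odd x" and "x * (a + 1) \<le> a * b"
  shows "x \<le> x * b mod (a * b + 1) \<and> x * b mod (a * b + 1) + x \<le> a * b + 1"
proof -
  define h c where "h = x div a" and "c = x mod a"
  have x: "x = h * a + c" and "c < a"
    using \<open>0 < a\<close> by (simp_all add: h_def c_def)
  have "c \<noteq> 0"
    using assms(1,3) by (auto simp: c_def dest: dvd_trans)
  have "a * (x + h) \<le> a * b"
    using assms(4) x by (simp add: algebra_simps)
  then have "x + h \<le> b" using \<open>0 < a\<close> by simp
  moreover have "b \<le> c * b" and "c * b + b \<le> a * b"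
    using \<open>c \<noteq> 0\<close> \<open>c < a\<close> mult_le_mono1[of "Suc c" a b] by simp_all
  ultimately have "x + h \<le> c * b \<and> c * b + x \<le> a * b + 1 + h"
    by linarith
  then show ?thesis
    using mult_mod_Suc_mult_window_iff[OF \<open>c < a\<close>] x by simp
qed

lemma window_mult_sqrt:
  fixes P x :: nat
  assumes "4 \<le> P" and "x + 3 \<le> 2 * P \<or> 2 * P + 3 \<le> x \<and> x + 9 \<le> 4 * P"
  shows "x \<le> x * P mod (2 * P * P + 1) \<and> x * P mod (2 * P * P + 1) + x \<le> 2 * P * P + 1"
  using assms(2)
proof
  assume "x + 3 \<le> 2 * P"
  then have "x * (P + 1) \<le> 2 * P * P"
    using mult_le_mono1[of "x + 3" "2 * P" P] by (simp add: algebra_simps)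
  then show ?thesis
    using mult_mod_window_no_wrap[of P x "2 * P"] \<open>4 \<le> P\<close> by simp
next
  assume "2 * P + 3 \<le> x \<and> x + 9 \<le> 4 * P"
  define d where "d = x - (2 * P + 3)"
  have x: "x = 1 * (2 * P) + (d + 3)" and "d + 12 \<le> 2 * P"
    using \<open>2 * P + 3 \<le> x \<and> x + 9 \<le> 4 * P\<close> unfolding d_def by linarith+
  have "d \<le> d * P" and "d * P + 12 * P \<le> 2 * P * P"
    using \<open>4 \<le> P\<close> mult_le_mono1[OF \<open>d + 12 \<le> 2 * P\<close>, of P] by (simp_all add: algebra_simps)
  then have "x + 1 \<le> d * P + 3 * P \<and> d * P + 3 * P + x \<le> 2 * P * P + 1 + 1"
    using \<open>4 \<le> P\<close> \<open>d + 12 \<le> 2 * P\<close> x by linarith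
  then have "x + 1 \<le> (d + 3) * P \<and> (d + 3) * P + x \<le> 2 * P * P + 1 + 1"
    by (simp only: distrib_right)
  moreover have "d + 3 < 2 * P" "1 \<le> (d + 3) * P"
    using \<open>4 \<le> P\<close> \<open>d + 12 \<le> 2 * P\<close> by simp_all
  ultimately show ?thesis
    using mult_mod_Suc_mult_window_iff[of "d + 3" "2 * P" 1 P] unfolding x by simp
qed

lemma window_mult_double_sqrt_digit:
  fixes P h c :: nat
  assumes "2 \<le> P" and "1 \<le> h" and "h \<le> 3" and "h \<le> c" and "c + 3 \<le> P"
  defines "x \<equiv> h * P + c"
  shows "x \<le> x * (2 * P) mod (2 * P * P + 1) \<and> x * (2 * P) mod (2 * P * P + 1) + x \<le> 2 * P * P + 1"
proof -
  have "h * P \<le> c * P" and "h * P \<le> 3 * P" and "(c + 3) * P \<le> P * P" and "c * 2 \<le> c * P"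
    using assms by (simp_all only: mult_le_mono1 mult_le_mono2)
  moreover have "(c + 3) * P = c * P + 3 * P" and "c * (2 * P) = 2 * (c * P)" and "P * (2 * P) = 2 * (P * P)"
    by (simp_all add: algebra_simps)
  ultimately have "h \<le> c * (2 * P) \<and> x + h \<le> c * (2 * P) \<and> c * (2 * P) + x \<le> P * (2 * P) + 1 + h"
    using assms unfolding x_def by linarith
  moreover have "c < P"
    using assms by simp
  ultimately show ?thesis
    using mult_mod_Suc_mult_window_iff[of c P h "2 * P"] unfolding x_def by (simp add: ac_simps)
qed

lemma window_mult_double_sqrt:
  fixes P x :: nat
  assumes "even P" and "4 \<le> P" and "odd x"
    and "x + 3 \<le> 2 * P \<or> 2 * P + 3 \<le> x \<and> x + 3 \<le> 3 * P \<or> 3 * P + 3 \<le> x \<and> x + 9 \<le> 4 * P"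
  shows "x \<le> x * (2 * P) mod (2 * P * P + 1) \<and> x * (2 * P) mod (2 * P * P + 1) + x \<le> 2 * P * P + 1"
proof -
  have "x \<noteq> P" using assms(1,3) by auto
  then consider "x < P" | "P < x" "x + 3 \<le> 2 * P" | "2 * P + 3 \<le> x" "x + 3 \<le> 3 * P"
    | "3 * P + 3 \<le> x" "x + 9 \<le> 4 * P"
    using assms(4) by linarith
  then show ?thesis
  proof cases
    case 1
    have "x * (2 * P + 1) \<le> (x + 1) * (2 * P)"
      using 1 by (simp add: algebra_simps)
    also have "\<dots> \<le> P * (2 * P)"
      using 1 by (intro mult_le_mono1) simp
    finally show ?thesis
      using mult_mod_window_no_wrap[of "2 * P" x P] \<open>4 \<le> P\<close> by (simp add: ac_simps)
  next
    case 2
    then show ?thesis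
      using window_mult_double_sqrt_digit[of P 1 "x - P"] \<open>4 \<le> P\<close> by simp
  next
    case 3
    then show ?thesis
      using window_mult_double_sqrt_digit[of P 2 "x - 2 * P"] \<open>4 \<le> P\<close> by simp
  next
    case 4
    then show ?thesis
      using window_mult_double_sqrt_digit[of P 3 "x - 3 * P"] \<open>4 \<le> P\<close> by simp
  qed
qed

lemma mult_Suc_le_double_square:
  fixes P s x :: nat
  assumes "2 * s \<le> P" and "x + 8 \<le> 4 * P"
  shows "x * (s + 1) \<le> 2 * P * P"
proof -
  have "x * (2 * s) \<le> x * P" and "(x + 8) * (P + 2) \<le> (4 * P) * (P + 2)"
    using assms by (simp_all only: mult_le_mono1 mult_le_mono2)
  moreover have "x * (2 * s) = 2 * (x * s)" and "(x + 8) * (P + 2) = x * P + 2 * x + 8 * P + 16"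
    and "(4 * P) * (P + 2) = 4 * (P * P) + 8 * P" and "x * (s + 1) = x * s + x"
    by (simp_all add: algebra_simps)
  ultimately show ?thesis
    by linarith
qed

lemma coset_leader_odd_ranges:
  fixes t x :: nat
  assumes "2 \<le> t" and "odd x"
    and "x + 3 \<le> 2 * 2 ^ t \<or> 2 * 2 ^ t + 3 \<le> x \<and> x + 3 \<le> 3 * 2 ^ t
      \<or> 3 * 2 ^ t + 3 \<le> x \<and> x + 9 \<le> 4 * 2 ^ t"
  shows "coset_leader (2 ^ (2 * t + 1) + 1) x"
proof -
  define P :: nat where "P = 2 ^ t"
  have "4 \<le> P" and "even P"
    using power_increasing[OF \<open>2 \<le> t\<close>, of "2::nat"] \<open>2 \<le> t\<close> by (simp_all add: P_def)
  have n: "2 * P * P + 1 = 2 ^ (2 * t + 1) + 1"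
    unfolding P_def by (simp only: mult_2 power_add power_one_right) simp
  have range: "x + 3 \<le> 2 * P \<or> 2 * P + 3 \<le> x \<and> x + 3 \<le> 3 * P \<or> 3 * P + 3 \<le> x \<and> x + 9 \<le> 4 * P"
    using assms(3) by (simp add: P_def)
  then have "x + 8 \<le> 4 * P" using \<open>4 \<le> P\<close> by linarith
  have "0 < x" using \<open>odd x\<close> by (simp add: odd_pos)
  have "x < 2 * P * P + 1"
    using \<open>x + 8 \<le> 4 * P\<close> mult_le_mono1[OF \<open>4 \<le> P\<close>, of P] by linarith
  have "x \<le> x * 2 ^ j mod (2 * P * P + 1) \<and> x * 2 ^ j mod (2 * P * P + 1) + x \<le> 2 * P * P + 1"
    if "j < 2 * t + 1" for j
  proof -
    define a b :: nat where "a = 2 ^ (2 * t + 1 - j)" and "b = 2 ^ j"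
    have ab: "a * b = 2 * P * P"
      using that n by (simp add: a_def b_def flip: power_add)
    consider "j < t" | "j = t" | "j = t + 1" | "t + 2 \<le> j" by linarith
    then show ?thesis
    proof cases
      case 1
      have "2 * b \<le> P"
        using power_increasing[of "j + 1" t "2::nat"] 1 by (simp add: P_def b_def)
      then have "x * (b + 1) \<le> a * b"
        using mult_Suc_le_double_square \<open>x + 8 \<le> 4 * P\<close> ab by simp
      then show ?thesis
        using mult_mod_window_no_wrap[of b x a] unfolding b_def[symmetric] ab[symmetric]
        by (simp add: b_def)
    next
      case 2
      have "x + 3 \<le> 2 * P \<or> 2 * P + 3 \<le> x \<and> x + 9 \<le> 4 * P"
        using range by linarith
      then show ?thesis
        using window_mult_sqrt[OF \<open>4 \<le> P\<close>] 2 by (simp add: P_def)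
    next
      case 3
      then show ?thesis
        using window_mult_double_sqrt[OF \<open>even P\<close> \<open>4 \<le> P\<close> \<open>odd x\<close> range] by (simp add: P_def)
    next
      case 4
      have "2 * a = 2 ^ Suc (2 * t + 1 - j)"
        by (simp add: a_def)
      also have "\<dots> \<le> P"
        unfolding P_def using 4 that by (intro power_increasing) auto
      finally have "2 * a \<le> P" .
      moreover have "even a" and "0 < a"
        using that by (simp_all add: a_def)
      moreover have "x * (a + 1) \<le> a * b"
        using mult_Suc_le_double_square \<open>2 * a \<le> P\<close> \<open>x + 8 \<le> 4 * P\<close> ab by simp
      ultimately show ?thesis
        using mult_mod_window_even_divisor[OF _ _ \<open>odd x\<close>, of a b]
        unfolding b_def[symmetric] ab[symmetric] by simp
    qed
  qed
  then show ?thesis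
    unfolding n[symmetric] using coset_leader_iff_window[OF n] \<open>0 < x\<close> \<open>x < 2 * P * P + 1\<close>
    by simp
qed

lemma outside_window_mult_sqrt:
  fixes P x :: nat
  assumes "3 \<le> P" and "x = 2 * P - 1 \<or> x = 2 * P + 1"
  shows "\<not> (x \<le> x * P mod (2 * P * P + 1) \<and> x * P mod (2 * P * P + 1) + x \<le> 2 * P * P + 1)"
  using assms(2)
proof
  assume x: "x = 2 * P - 1"
  have "(x + 1) * P = 2 * P * P"
    using x \<open>3 \<le> P\<close> by simp
  then have "\<not> x * P + x \<le> 2 * P * P + 1"
    using x \<open>3 \<le> P\<close> by (simp add: algebra_simps)
  moreover have "x < 2 * P" using x \<open>3 \<le> P\<close> by simp
  ultimately show ?thesis
    using mult_mod_Suc_mult_window_iff[of x "2 * P" 0 P] by simp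
next
  assume x: "x = 2 * P + 1"
  then show ?thesis
    using mult_mod_Suc_mult_window_iff[of 1 "2 * P" 1 P] \<open>3 \<le> P\<close> by simp
qed

lemma outside_window_mult_double_sqrt:
  fixes P x :: nat
  assumes "5 \<le> P" and "x = 3 * P - 1 \<or> x = 3 * P + 1"
  shows "\<not> (x \<le> x * (2 * P) mod (2 * P * P + 1) \<and> x * (2 * P) mod (2 * P * P + 1) + x \<le> 2 * P * P + 1)"
  using assms(2)
proof
  assume x: "x = 3 * P - 1"
  define c where "c = P - 1"
  have x': "x = 2 * P + c" and "c < P" and "c + 1 = P"
    using x \<open>5 \<le> P\<close> by (simp_all add: c_def)
  have "c * (2 * P) + 2 * P = P * (2 * P)"
    using \<open>c + 1 = P\<close> by (metis add_mult_distrib mult_1)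
  moreover have "5 * (2 * P) \<le> P * (2 * P)"
    using \<open>5 \<le> P\<close> by (rule mult_le_mono1)
  ultimately have "2 \<le> c * (2 * P)" and "\<not> c * (2 * P) + x \<le> P * (2 * P) + 1 + 2"
    using x' \<open>c + 1 = P\<close> \<open>5 \<le> P\<close> by linarith+
  then show ?thesis
    using mult_mod_Suc_mult_window_iff[OF \<open>c < P\<close>, of 2 "2 * P"] x' by (simp add: ac_simps)
next
  assume x: "x = 3 * P + 1"
  then show ?thesis
    using mult_mod_Suc_mult_window_iff[of 1 P 3 "2 * P"] \<open>5 \<le> P\<close> by (simp add: ac_simps)
qed

text \<open>The bound \<open>9 \<le> q\<close> is the only place where \<open>m \<ge> 11\<close> is needed; the leader
ranges are already correct for \<open>t \<ge> 2\<close>.\<close>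

lemma outside_window_mult_half_sqrt:
  fixes q x :: nat
  assumes "9 \<le> q" and "8 * q \<le> x + 7" and "x \<le> 8 * q + 7" and "x \<noteq> 8 * q"
  shows "\<not> (x \<le> x * q mod (8 * q * q + 1) \<and> x * q mod (8 * q * q + 1) + x \<le> 8 * q * q + 1)"
proof (cases "x < 8 * q")
  case True
  define D where "D = 8 * q - x"
  have "D \<le> 7" and "x + D = 8 * q"
    using True assms by (simp_all add: D_def)
  then have "x * q + D * q = 8 * q * q" and "D * q \<le> 7 * q"
    by (metis add_mult_distrib mult.assoc, simp)
  then have "\<not> x * q + x \<le> 8 * q * q + 1"
    using \<open>x + D = 8 * q\<close> \<open>D \<le> 7\<close> \<open>9 \<le> q\<close> by linarith
  then show ?thesis
    using mult_mod_Suc_mult_window_iff[OF True, of 0 q] by (simp add: ac_simps)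
next
  case False
  define D where "D = x - 8 * q"
  have x: "x = 1 * (8 * q) + D" and "D < 8 * q" and "1 \<le> D" and "D \<le> 7"
    using False assms by (simp_all add: D_def)
  have "1 \<le> D * q" and "D * q \<le> 7 * q"
    using \<open>1 \<le> D\<close> \<open>D \<le> 7\<close> \<open>9 \<le> q\<close> by simp_all
  then have "1 \<le> D * q \<and> \<not> x + 1 \<le> D * q"
    using x by linarith
  then show ?thesis
    using mult_mod_Suc_mult_window_iff[OF \<open>D < 8 * q\<close>, of 1 q] x by (simp add: ac_simps)
qed

lemma not_coset_leader_witnesses:
  fixes t x :: nat
  assumes "5 \<le> t" and "odd x"
    and "x = 2 * 2 ^ t - 1 \<or> x = 2 * 2 ^ t + 1 \<or> x = 3 * 2 ^ t - 1 \<or> x = 3 * 2 ^ t + 1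
      \<or> 4 * 2 ^ t \<le> x + 7 \<and> x \<le> 4 * 2 ^ t + 7"
  shows "\<not> coset_leader (2 ^ (2 * t + 1) + 1) x"
proof -
  define P q :: nat where "P = 2 ^ t" and "q = 2 ^ (t - 1)"
  have "P = 2 * q"
    using \<open>5 \<le> t\<close> by (simp add: P_def q_def flip: power_Suc)
  have "16 \<le> q"
    using power_increasing[of 4 "t - 1" "2::nat"] \<open>5 \<le> t\<close> by (simp add: q_def)
  have n: "2 * P * P + 1 = 2 ^ (2 * t + 1) + 1"
    unfolding P_def by (simp only: mult_2 power_add power_one_right) simp
  have "0 < x" using \<open>odd x\<close> by (simp add: odd_pos)
  have "x + 8 \<le> 5 * P" and "5 * P \<le> P * P"
    using assms(3) \<open>P = 2 * q\<close> \<open>16 \<le> q\<close> by (auto simp: P_def)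
  then have "x < 2 * P * P + 1" by linarith
  have "\<exists>j < 2 * t + 1. \<not> (x \<le> x * 2 ^ j mod (2 * P * P + 1) \<and> x * 2 ^ j mod (2 * P * P + 1) + x \<le> 2 * P * P + 1)"
  proof -
    consider "x = 2 * P - 1 \<or> x = 2 * P + 1" | "x = 3 * P - 1 \<or> x = 3 * P + 1"
      | "8 * q \<le> x + 7" "x \<le> 8 * q + 7"
      using assms(3) \<open>P = 2 * q\<close> by (auto simp: P_def)
    then show ?thesis
    proof cases
      case 1
      then show ?thesis
        using outside_window_mult_sqrt[of P x] \<open>16 \<le> q\<close> \<open>P = 2 * q\<close> by (intro exI[of _ t]) (simp add: P_def)
    next
      case 2
      then show ?thesis
        using outside_window_mult_double_sqrt[of P x] \<open>16 \<le> q\<close> \<open>P = 2 * q\<close> \<open>5 \<le> t\<close> by (intro exI[of _ "t + 1"]) (simp add: P_def)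
    next
      case 3
      moreover have "x \<noteq> 8 * q" using \<open>odd x\<close> by auto
      ultimately have "\<not> (x \<le> x * q mod (8 * q * q + 1) \<and> x * q mod (8 * q * q + 1) + x \<le> 8 * q * q + 1)"
        using outside_window_mult_half_sqrt[of q x] \<open>16 \<le> q\<close> by simp
      moreover have "2 * P * P = 8 * q * q" using \<open>P = 2 * q\<close> by simp
      ultimately show ?thesis
        using \<open>5 \<le> t\<close> unfolding \<open>2 * P * P = 8 * q * q\<close>
        by (intro exI[of _ "t - 1"]) (simp add: q_def)
    qed
  qed
  then show ?thesis
    unfolding n[symmetric] using coset_leader_iff_window[OF n] \<open>0 < x\<close> \<open>x < 2 * P * P + 1\<close>
    by simp
qed

theorem theorem3p1:
  fixes t m n x :: nat
  assumes "m = 2 * t + 1" and "m \<ge> 11" and "n = 2 ^ m + 1" and "odd x"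
  shows "(1 \<le> x \<and> x \<le> 2 ^ (t + 1) - 3 \<longrightarrow> coset_leader n x)
     \<and> (2 ^ (t + 1) + 3 \<le> x \<and> x \<le> 2 ^ (t + 1) + 2 ^ t - 3 \<longrightarrow> coset_leader n x)
     \<and> (2 ^ (t + 1) + 2 ^ t + 3 \<le> x \<and> x \<le> 2 ^ (t + 2) - 9 \<longrightarrow> coset_leader n x)
     \<and> ((x \<in> {2 ^ (t + 1) - 1, 2 ^ (t + 1) + 1, 2 ^ (t + 1) + 2 ^ t - 1, 2 ^ (t + 1) + 2 ^ t + 1}
          \<or> (2 ^ (t + 2) - 7 \<le> x \<and> x \<le> 2 ^ (t + 2) + 7)) \<longrightarrow> \<not> coset_leader n x)"
proof -
  have "5 \<le> t" using assms(1,2) by simp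
  then have "32 \<le> (2::nat) ^ t"
    using power_increasing[of 5 t "2::nat"] by simp
  have n: "n = 2 ^ (2 * t + 1) + 1" using assms(1,3) by simp
  have leader: "coset_leader n x"
    if "x + 3 \<le> 2 * 2 ^ t \<or> 2 * 2 ^ t + 3 \<le> x \<and> x + 3 \<le> 3 * 2 ^ t
      \<or> 3 * 2 ^ t + 3 \<le> x \<and> x + 9 \<le> 4 * 2 ^ t"
    using coset_leader_odd_ranges[OF _ \<open>odd x\<close> that] \<open>5 \<le> t\<close> n by simp
  have not_leader: "\<not> coset_leader n x"
    if "x = 2 * 2 ^ t - 1 \<or> x = 2 * 2 ^ t + 1 \<or> x = 3 * 2 ^ t - 1 \<or> x = 3 * 2 ^ t + 1
      \<or> 4 * 2 ^ t \<le> x + 7 \<and> x \<le> 4 * 2 ^ t + 7"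
    using not_coset_leader_witnesses[OF \<open>5 \<le> t\<close> \<open>odd x\<close> that] n by simp
  show ?thesis
    using \<open>32 \<le> 2 ^ t\<close> by (intro conjI impI leader not_leader) (auto simp: power_add)
qed

end
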